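(* Let $(W,V)$ be an independent-type $\mathcal Y$-valued transition matrix on $\mathcal X$ with $W$ irreducible and invertible, and let $P$ be a distribution on $\mathcal X$. Then $$\mathcal L^I_{2,W,V}=\big\{([W,A],0)\in\mathcal G^I:\ A\in M_d(\mathbb R),\ A^Tu_{\mathcal X}=0,\ [I_{S(V)_x},A]=0\ \forall x\in\mathcal X\big\},$$ $$\mathcal L^I_{2,P,W,V}=\big\{([W,A],0)\in\mathcal G^I:\ A\in M_d(\mathbb R),\ A^Tu_{\mathcal X}=0,\ AP=0,\ [I_{S(V)_x},A]=0\ \forall x\in\mathcal X\big\},$$ where $0$ denotes the tuple $C$ with all $C_y=0$ and $[X,Y]=XY-YX$.
   Context: Let $\mathcal X=\{1,\dots,d\}$, $\mathcal Y=\{1,\dots,d_Y\}$, $u_{\mathcal X}\in\mathbb R^{\mathcal X}$ the all-ones vector. An independent-type $\mathcal Y$-valued transition matrix $(W,V)$ consists of a column-stochastic $d\times d$ matrix $W(x|x')$ and a transition matrix $V$ from $\mathcal X$ to $\mathcal Y$ ($V(y|x')\ge0$, $\sum_yV(y|x')=1$), defining $W_y:=WD(V_y)$, where $V_y\in\mathbb R^{\mathcal X}$, $V_y(x')=V(y|x')$, and $D(v)$ is the diagonal matrix with diagonal $v$. For $x\in\mathcal X$, $V_{*,x}\in\mathbb R^{\mathcal Y}$ is $V_{*,x}(y)=V(y|x)$, $S(V)_x:=\{x'\in\mathcal X: V_{*,x'}=V_{*,x}\}$, and $I_S$ is the diagonal $0/1$ matrix projecting onto the coordinates in $S$. $\mathcal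 G^I$ is the set of pairs $(B,C)$ with $B$ a real $d\times d$ matrix vanishing wherever $W(x|x')=0$ and $C=(C_y)_{y\in\mathcal Y}$, $C_y\in\mathbb R^{\mathcal X}$, $C_y(x')=0$ wherever $V(y|x')=0$. $\mathcal L^I_{1,W,V}:=\{(B,C)\in\mathcal G^I: B^Tu_{\mathcal X}=0,\ \sum_yC_y=0\}$. Let $\mathcal L_2:=\{(W_yA-AW_y)_{y\in\mathcal Y}: A\in M_d(\mathbb R),\ A^Tu_{\mathcal X}=0\}$ and $\mathcal L_{2,P}:=\{(W_yA-AW_y)_{y}: A^Tu_{\mathcal X}=0,\ AP=0\}$. Then $\mathcal L^I_{2,W,V}:=\{(B,C)\in\mathcal L^I_{1,W,V}: (BD(V_y)+WD(C_y))_{y}\in\mathcal L_2\}$ and $\mathcal L^I_{2,P,W,V}:=\{(B,C)\in\mathcal L^I_{1,W,V}:(BD(V_y)+WD(C_y))_y\in\mathcal L_{2,P}\}$. *)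

theory Defs
  imports "HOL-Analysis.Analysis"
begin

text \<open>Conventions: the state space X is a finite type 'x, the output alphabet Y a finite
type 'y. A d x d matrix is real^'x^'x with entry M$x$x' standing for M(x|x').
The transition matrix V from X to Y is a function V :: 'y => 'x => real with
V y x' = V(y|x'). A tuple C = (C_y)_y is a function 'y => real^'x.\<close>

definition diagm :: "real^'n \<Rightarrow> real^'n^'n" where
  "diagm v = (\<chi> i j. if i = j then v $ i else 0)"

fun matpow :: "real^'n^'n \<Rightarrow> nat \<Rightarrow> real^'n^'n" where
  "matpow M 0 = mat 1"
| "matpow M (Suc k) = M ** matpow M k"

definition irreducible_mat :: "real^'n^'n \<Rightarrow> bool" where
  "irreducible_mat M \<longleftrightarrow> (\<forall>i j. \<exists>k. matpow M k $ i $ j > 0)"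

definition column_stochastic :: "real^'n^'n \<Rightarrow> bool" where
  "column_stochastic W \<longleftrightarrow> (\<forall>x x'. W $ x $ x' \<ge> 0) \<and> (\<forall>x'. (\<Sum>x\<in>UNIV. W $ x $ x') = 1)"

definition transition_to :: "('y::finite \<Rightarrow> 'x \<Rightarrow> real) \<Rightarrow> bool" where
  "transition_to V \<longleftrightarrow> (\<forall>y x'. V y x' \<ge> 0) \<and> (\<forall>x'. (\<Sum>y\<in>UNIV. V y x') = 1)"

definition distribution :: "real^'n \<Rightarrow> bool" where
  "distribution P \<longleftrightarrow> (\<forall>x. P $ x \<ge> 0) \<and> (\<Sum>x\<in>UNIV. P $ x) = 1"

definition ones :: "real^'n" where
  "ones = (\<chi> i. 1)"

definition Vvec :: "('y \<Rightarrow> 'x \<Rightarrow> real) \<Rightarrow> 'y \<Rightarrow> real^'x" where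
  "Vvec V y = (\<chi> x'. V y x')"

definition Wy :: "real^'x^'x \<Rightarrow> ('y \<Rightarrow> 'x \<Rightarrow> real) \<Rightarrow> 'y \<Rightarrow> real^'x^'x" where
  "Wy W V y = W ** diagm (Vvec V y)"

definition commutator :: "real^'n^'n \<Rightarrow> real^'n^'n \<Rightarrow> real^'n^'n" where
  "commutator X Y = X ** Y - Y ** X"

definition SV :: "('y \<Rightarrow> 'x \<Rightarrow> real) \<Rightarrow> 'x \<Rightarrow> 'x set" where
  "SV V x = {x'. \<forall>y. V y x' = V y x}"

definition proj :: "'x set \<Rightarrow> real^'x^'x" where
  "proj S = diagm (\<chi> i. if i \<in> S then 1 else 0)"

definition GI :: "real^'x^'x \<Rightarrow> ('y \<Rightarrow> 'x \<Rightarrow> real)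
    \<Rightarrow> ((real^'x^'x) \<times> ('y \<Rightarrow> real^'x)) set" where
  "GI W V = {(B, C). (\<forall>x x'. W $ x $ x' = 0 \<longrightarrow> B $ x $ x' = 0)
                   \<and> (\<forall>y x'. V y x' = 0 \<longrightarrow> C y $ x' = 0)}"

definition L1I :: "real^'x^'x \<Rightarrow> ('y::finite \<Rightarrow> 'x \<Rightarrow> real)
    \<Rightarrow> ((real^'x^'x) \<times> ('y \<Rightarrow> real^'x)) set" where
  "L1I W V = {(B, C) \<in> GI W V. transpose B *v ones = 0 \<and> (\<Sum>y\<in>UNIV. C y) = 0}"

definition L2 :: "real^'x^'x \<Rightarrow> ('y \<Rightarrow> 'x \<Rightarrow> real) \<Rightarrow> ('y \<Rightarrow> real^'x^'x) set" where
  "L2 W V = {(\<lambda>y. Wy W V y ** A - A ** Wy W V y) | A. transpose A *v ones = 0}"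

definition L2P :: "real^'x \<Rightarrow> real^'x^'x \<Rightarrow> ('y \<Rightarrow> 'x \<Rightarrow> real) \<Rightarrow> ('y \<Rightarrow> real^'x^'x) set" where
  "L2P P W V = {(\<lambda>y. Wy W V y ** A - A ** Wy W V y) | A. transpose A *v ones = 0 \<and> A *v P = 0}"

definition L2I :: "real^'x^'x \<Rightarrow> ('y::finite \<Rightarrow> 'x \<Rightarrow> real)
    \<Rightarrow> ((real^'x^'x) \<times> ('y \<Rightarrow> real^'x)) set" where
  "L2I W V = {(B, C) \<in> L1I W V.
      (\<lambda>y. B ** diagm (Vvec V y) + W ** diagm (C y)) \<in> L2 W V}"

definition L2PI :: "real^'x \<Rightarrow> real^'x^'x \<Rightarrow> ('y::finite \<Rightarrow> 'x \<Rightarrow> real)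
    \<Rightarrow> ((real^'x^'x) \<times> ('y \<Rightarrow> real^'x)) set" where
  "L2PI P W V = {(B, C) \<in> L1I W V.
      (\<lambda>y. B ** diagm (Vvec V y) + W ** diagm (C y)) \<in> L2P P W V}"

end

theory Submission
  imports Defs
begin

text \<open>Write \<open>D(v)\<close> for the diagonal matrix with diagonal \<open>v\<close>. Since \<open>\<Sum>y D(V_y) = I\<close> and
\<open>\<Sum>y C_y = 0\<close>, summing the defining equations \<open>B D(V_y) + W D(C_y) = [W D(V_y), A]\<close> over \<open>y\<close>
gives \<open>B = [W, A]\<close>. Substituting back leaves \<open>W ([A, D(V_y)] + D(C_y)) = 0\<close>, so by invertibility
of \<open>W\<close> the commutator \<open>[A, D(V_y)]\<close> is diagonal; but a commutator with a diagonal matrix has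
zero diagonal, hence \<open>C_y = 0\<close> and \<open>A\<close> commutes with every \<open>D(V_y)\<close>. The latter says that \<open>A\<close>
only connects states with equal output distributions, which is exactly commutation with the
projections \<open>I_{S(V)_x}\<close>.\<close>

lemma matrix_diff_ldistrib: "(A::'a::ring_1^'n^'m) ** (B - C) = A ** B - A ** C"
  by (vector matrix_matrix_mult_def sum_subtractf right_diff_distrib)

lemma matrix_diff_rdistrib: "((A::'a::ring_1^'n^'m) - B) ** C = A ** C - B ** C"
  by (vector matrix_matrix_mult_def sum_subtractf left_diff_distrib)

lemma matrix_add_rdistrib: "((A::'a::semiring_1^'n^'m) + B) ** C = A ** C + B ** C"
  by (vector matrix_matrix_mult_def sum.distrib distrib_right)

lemma matrix_mul_sum_right:
  "finite S \<Longrightarrow> (M::'a::semiring_1^'n^'m) ** sum f S = (\<Sum>x\<in>S. M ** f x)"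
  by (induction S rule: finite_induct) (auto simp: matrix_add_ldistrib)

lemma matrix_mul_sum_left:
  "finite S \<Longrightarrow> sum f S ** (M::'a::semiring_1^'n^'m) = (\<Sum>x\<in>S. f x ** M)"
  by (induction S rule: finite_induct) (auto simp: matrix_add_rdistrib)

lemma matrix_mul_diagm_nth: "(M ** diagm v) $ i $ j = M $ i $ j * v $ j"
  by (simp add: matrix_matrix_mult_def diagm_def if_distrib if_distribR cong: if_cong)

lemma diagm_mul_matrix_nth: "(diagm v ** M) $ i $ j = v $ i * M $ i $ j"
  by (simp add: matrix_matrix_mult_def diagm_def if_distrib if_distribR cong: if_cong)

lemma diagm_zero [simp]: "diagm 0 = 0"
  by (simp add: diagm_def vec_eq_iff)

lemma sum_diagm: "finite S \<Longrightarrow> (\<Sum>y\<in>S. diagm (f y)) = diagm (sum f S)"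
  by (induction S rule: finite_induct) (auto simp: diagm_def vec_eq_iff)

lemma sum_diagm_Vvec:
  assumes "transition_to V"
  shows "(\<Sum>y\<in>UNIV. diagm (Vvec V y)) = mat 1"
  using assms by (simp add: sum_diagm transition_to_def diagm_def mat_def vec_eq_iff Vvec_def)

lemma commutator_skew: "commutator X Y = - commutator Y X"
  by (simp add: commutator_def)

lemma commutator_diagm_nth: "commutator A (diagm v) $ i $ j = A $ i $ j * (v $ j - v $ i)"
  by (simp add: commutator_def matrix_mul_diagm_nth diagm_mul_matrix_nth algebra_simps)

lemma commutator_diagm_eq_0_iff:
  "commutator A (diagm v) = 0 \<longleftrightarrow> (\<forall>i j. A $ i $ j \<noteq> 0 \<longrightarrow> v $ i = v $ j)"
  by (auto simp: vec_eq_iff commutator_diagm_nth) metis+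

lemma commutator_proj_eq_0_iff:
  "commutator (proj S) A = 0 \<longleftrightarrow> (\<forall>i j. A $ i $ j \<noteq> 0 \<longrightarrow> (i \<in> S \<longleftrightarrow> j \<in> S))"
proof -
  have "commutator (proj S) A = 0 \<longleftrightarrow> commutator A (proj S) = 0"
    by (metis commutator_skew neg_equal_0_iff_equal)
  then show ?thesis
    unfolding proj_def commutator_diagm_eq_0_iff by auto
qed

lemma same_SV_iff: "(\<forall>x. i \<in> SV V x \<longleftrightarrow> j \<in> SV V x) \<longleftrightarrow> (\<forall>y. V y i = V y j)"
proof
  assume "\<forall>x. i \<in> SV V x \<longleftrightarrow> j \<in> SV V x"
  then have "i \<in> SV V j"
    by (simp add: SV_def)
  then show "\<forall>y. V y i = V y j"
    by (simp add: SV_def)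
qed (simp add: SV_def)

lemma commutator_proj_SV_eq_0_iff:
  "(\<forall>x. commutator (proj (SV V x)) A = 0) \<longleftrightarrow> (\<forall>y. commutator A (diagm (Vvec V y)) = 0)"
proof -
  have "(\<forall>x. commutator (proj (SV V x)) A = 0)
      \<longleftrightarrow> (\<forall>i j. A $ i $ j \<noteq> 0 \<longrightarrow> (\<forall>x. i \<in> SV V x \<longleftrightarrow> j \<in> SV V x))"
    unfolding commutator_proj_eq_0_iff by blast
  also have "\<dots> \<longleftrightarrow> (\<forall>i j. A $ i $ j \<noteq> 0 \<longrightarrow> (\<forall>y. V y i = V y j))"
    by (simp only: same_SV_iff)
  also have "\<dots> \<longleftrightarrow> (\<forall>y. commutator A (diagm (Vvec V y)) = 0)"
    unfolding commutator_diagm_eq_0_iff Vvec_def by auto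
  finally show ?thesis .
qed

lemma transpose_commutator_ones:
  assumes "column_stochastic W" and "transpose A *v ones = 0"
  shows "transpose (commutator W A) *v ones = 0"
proof -
  have "ones v* W = ones"
    using assms(1) by (simp add: column_stochastic_def vec_eq_iff vector_matrix_mult_def ones_def)
  moreover have "ones v* A = 0"
    using assms(2) by simp
  ultimately show ?thesis
    by (simp add: commutator_def matrix_diff_rdistrib vector_matrix_mul_assoc[symmetric]
        matrix_transpose_mul vector_matrix_mult_0 algebra_simps)
qed

lemma tangent_equation_imp_commutator:
  assumes "transition_to V" and "(\<Sum>y\<in>UNIV. C y) = 0"
    and "\<And>y. B ** diagm (Vvec V y) + W ** diagm (C y) = Wy W V y ** A - A ** Wy W V y"
  shows "B = commutator W A"
proof -
  define D where "D y = diagm (Vvec V y)" for y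
  have "(\<Sum>y\<in>UNIV. B ** D y + W ** diagm (C y)) = (\<Sum>y\<in>UNIV. W ** D y ** A - A ** W ** D y)"
    using assms(3) by (simp add: D_def Wy_def matrix_mul_assoc)
  moreover have "(\<Sum>y\<in>UNIV. W ** diagm (C y)) = 0"
    using assms(2) by (simp add: matrix_mul_sum_right[symmetric] sum_diagm)
  ultimately have "B ** (\<Sum>y\<in>UNIV. D y) = W ** (\<Sum>y\<in>UNIV. D y) ** A - A ** W ** (\<Sum>y\<in>UNIV. D y)"
    by (simp add: sum.distrib sum_subtractf matrix_mul_sum_right matrix_mul_sum_left
        matrix_mul_assoc)
  then show ?thesis
    using assms(1) by (simp add: D_def sum_diagm_Vvec commutator_def)
qed

lemma tangent_equation_iff:
  assumes "transition_to V" and "invertible W" and "(\<Sum>y\<in>UNIV. C y) = 0"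
  shows "(\<lambda>y. B ** diagm (Vvec V y) + W ** diagm (C y)) = (\<lambda>y. Wy W V y ** A - A ** Wy W V y)
    \<longleftrightarrow> B = commutator W A \<and> C = (\<lambda>y. 0) \<and> (\<forall>y. commutator A (diagm (Vvec V y)) = 0)"
    (is "?eq \<longleftrightarrow> _")
proof
  assume eq: ?eq
  then have B: "B = commutator W A"
    using assms(1,3) tangent_equation_imp_commutator by meson
  obtain W' where W': "W' ** W = mat 1"
    using assms(2) invertible_left_inverse by blast
  have E: "commutator A (diagm (Vvec V y)) + diagm (C y) = 0" for y
  proof -
    have "W ** (commutator A (diagm (Vvec V y)) + diagm (C y)) = 0"
      using fun_cong[OF eq, of y] B
      by (simp add: commutator_def Wy_def matrix_add_ldistrib matrix_diff_ldistrib
          matrix_diff_rdistrib matrix_mul_assoc algebra_simps)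
    then have "W' ** (W ** (commutator A (diagm (Vvec V y)) + diagm (C y))) = 0"
      by simp
    then show ?thesis
      by (simp add: matrix_mul_assoc W')
  qed
  have C: "C = (\<lambda>y. 0)"
  proof (intro ext, subst vec_eq_iff, intro allI)
    fix y i
    have "(commutator A (diagm (Vvec V y)) + diagm (C y)) $ i $ i = 0"
      using E by simp
    then show "C y $ i = 0 $ i"
      by (simp add: commutator_diagm_nth) (simp add: diagm_def)
  qed
  show "B = commutator W A \<and> C = (\<lambda>y. 0) \<and> (\<forall>y. commutator A (diagm (Vvec V y)) = 0)"
    using B C E by simp
next
  assume "B = commutator W A \<and> C = (\<lambda>y. 0) \<and> (\<forall>y. commutator A (diagm (Vvec V y)) = 0)"
  then show ?eq
    by (auto simp: commutator_def Wy_def matrix_diff_rdistrib matrix_mul_assoc[symmetric])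
qed

lemma tangent_equation_iff_commutator_proj:
  assumes "transition_to V" and "invertible W" and "(\<Sum>y\<in>UNIV. C y) = 0"
  shows "(\<lambda>y. B ** diagm (Vvec V y) + W ** diagm (C y)) = (\<lambda>y. Wy W V y ** A - A ** Wy W V y)
    \<longleftrightarrow> B = commutator W A \<and> C = (\<lambda>y. 0) \<and> (\<forall>x. commutator (proj (SV V x)) A = 0)"
  using tangent_equation_iff[OF assms] by (simp only: commutator_proj_SV_eq_0_iff)

lemma L1I_tangent_equation_set_eq:
  assumes "column_stochastic W" and "transition_to V" and "invertible W"
  shows "{(B, C) \<in> L1I W V. (\<lambda>y. B ** diagm (Vvec V y) + W ** diagm (C y))
            \<in> {(\<lambda>y. Wy W V y ** A - A ** Wy W V y) | A. transpose A *v ones = 0 \<and> Q A}}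
    = {(commutator W A, (\<lambda>y. 0)) | A. transpose A *v ones = 0 \<and> Q A
         \<and> (\<forall>x. commutator (proj (SV V x)) A = 0)} \<inter> GI W V"
    (is "?L = ?R")
proof (intro set_eqI iffI)
  fix BC assume "BC \<in> ?L"
  then obtain A B C where "BC = (B, C)" "(B, C) \<in> GI W V" "(\<Sum>y\<in>UNIV. C y) = 0"
    "transpose A *v ones = 0" "Q A"
    "(\<lambda>y. B ** diagm (Vvec V y) + W ** diagm (C y)) = (\<lambda>y. Wy W V y ** A - A ** Wy W V y)"
    unfolding L1I_def by blast
  with tangent_equation_iff_commutator_proj[OF assms(2,3)] show "BC \<in> ?R"
    by blast
next
  fix BC assume "BC \<in> ?R"
  then obtain A where BC: "BC = (commutator W A, (\<lambda>y. 0))" and "BC \<in> GI W V"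
    and A: "transpose A *v ones = 0" "Q A" "\<forall>x. commutator (proj (SV V x)) A = 0"
    by blast
  then have "BC \<in> L1I W V"
    using transpose_commutator_ones[OF assms(1)] by (simp add: L1I_def)
  moreover have "(\<lambda>y. commutator W A ** diagm (Vvec V y) + W ** diagm 0)
      = (\<lambda>y. Wy W V y ** A - A ** Wy W V y)"
    using tangent_equation_iff_commutator_proj[OF assms(2,3), of "\<lambda>y. 0"] A(3) by simp
  ultimately show "BC \<in> ?L"
    using A(1,2) unfolding BC by blast
qed

theorem corollary2:
  fixes W :: "real^'x::finite^'x" and V :: "'y::finite \<Rightarrow> 'x \<Rightarrow> real" and P :: "real^'x"
  assumes "column_stochastic W" and "transition_to V"
    and "irreducible_mat W" and "invertible W"
    and "distribution P"
  shows "(L2I W V = {(commutator W A, (\<lambda>y. 0)) | A. transpose A *v ones = 0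
                       \<and> (\<forall>x. commutator (proj (SV V x)) A = 0)} \<inter> GI W V)
    \<and> (L2PI P W V = {(commutator W A, (\<lambda>y. 0)) | A. transpose A *v ones = 0 \<and> A *v P = 0
                       \<and> (\<forall>x. commutator (proj (SV V x)) A = 0)} \<inter> GI W V)"
  using L1I_tangent_equation_set_eq[OF assms(1,2,4), of "\<lambda>A. True"]
    L1I_tangent_equation_set_eq[OF assms(1,2,4), of "\<lambda>A. A *v P = 0"]
  by (simp add: L2I_def L2PI_def L2_def L2P_def conj_assoc)

end
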